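(* Let $L$ be a finite list of boxes in $(0,1]^3$, let $k\ge2$ and $c\ge 2$ be integers, and run Steps 1–2 of algorithm 3SSP (described in the context) with parameters $k,c$. For $q=1,\dots,k$ let $w^q_1\ge w^q_2\ge\dots\ge w^q_{m^q}$ be the widths of the $m^q$ segments of type $q$ (segments containing items of group $G_q$), in the order they were opened. Let $g$ be the function (defined in the context) associated with a feasible solution $\bar\pi$ of the dual fractional bin packing LP for the instance $I(L)$ satisfying $\bar\pi_1\ge\dots\ge\bar\pi_p$, and let $G^q=\sum_{i=1}^{m^q} g(w^q_i)$. Then $$W(L) > (c-1)\sum_{q=1}^k G^q - ck,$$ where $W(L)=\sum_{R\in L} f_k(l(R))\,g(w(R))\,h(R)$.
   Context: Boxes $R=(l(R),w(R),h(R))$ (length, width, height). Algorithm 3SSP, Steps 1–2: partition $L$ into $G_1,\dots,G_k$, where for $i<k$, $G_i$ is the set of boxes of length in $(\frac1{i+1},\frac1i]$ and $G_k$ the set of boxes of length in $(0,\frac1k]$. Sort each group by non-increasing width. GNF (for $G_i$, $i<k$): while items remain, open a segment of size $(1,w_y,c)$ with $w_y$ the width of the first remaining item, divide it into $i$ slips of size $(\frac1i,w_y,c)$, and pack the remaining items in order into the slips by Next Fit with respect to height (stack in the current slip while total height $\le c$, else close it and move to the next slip); when all slips are closed, repeat. GNFDH (for $G_k$): while items remain, open a segment of size $(1,w_y,c)$ with $w_y$ the width of the first remaining item, find the maximal $j$ such that the first $j$ remaining items fit, ignoring widths, in the $1\times c$ length–height face by NFDH (sort by non-increasing height, pack in levels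 left to right, opening a new level on top when needed), pack them so, and repeat. $I(L)$ is the list of widths of all segments. Fractional bin packing: for a 1D instance with distinct sizes $s_1>s_2>\dots>s_p$ in $(0,1]$, a feasible pattern is a nonnegative integer vector $v=(v_1,\dots,v_p)$ with $\sum_j v_js_j\le1$. The dual LP is: maximize $\sum_j n_j\pi_j$ subject to $\sum_j v_j\pi_j\le1$ for every feasible pattern $v$ and $\pi\ge0$ ($n_j$ the multiplicity of size $s_j$). Given a feasible dual solution $\bar\pi$ with $\bar\pi_1\ge\dots\ge\bar\pi_p$, set $\bar\pi_{p+1}=0$, $s_0=1$, $s_{p+1}=0$ and define $g(0)=0$, $g(x)=\bar\pi_j$ for $x\in[s_j,s_{j-1})$ ($1\le j\le p+1$), and $g(1)=\bar\pi_1$. Weighting function: $f_k(x)=\frac1t$ if $\frac1{t+1}<x\le\frac1t$ with $1\le t<k$, and $f_k(x)=\frac{kx}{k-1}$ if $0<x\le\frac1k$. *)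

theory Defs
  imports Complex_Main "HOL-Library.Multiset"
begin

type_synonym box = "real \<times> real \<times> real"

definition len :: "box \<Rightarrow> real" where "len R = fst R"
definition wid :: "box \<Rightarrow> real" where "wid R = fst (snd R)"
definition hgt :: "box \<Rightarrow> real" where "hgt R = snd (snd R)"

definition unit_box :: "box \<Rightarrow> bool" where
  "unit_box R \<longleftrightarrow> 0 < len R \<and> len R \<le> 1 \<and> 0 < wid R \<and> wid R \<le> 1 \<and> 0 < hgt R \<and> hgt R \<le> 1"

definition in_group :: "nat \<Rightarrow> nat \<Rightarrow> box \<Rightarrow> bool" where
  "in_group k i R \<longleftrightarrow>
     (if i < k then 1 / real (i + 1) < len R \<and> len R \<le> 1 / real i
      else 0 < len R \<and> len R \<le> 1 / real k)"

(* Next Fit into one slip of height c, starting with accumulated height acc: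
   number of items stacked into the slip before it is closed *)
fun nf_take :: "real \<Rightarrow> real \<Rightarrow> box list \<Rightarrow> nat" where
  "nf_take c acc [] = 0"
| "nf_take c acc (x # xs) =
     (if acc + hgt x \<le> c then Suc (nf_take c (acc + hgt x) xs) else 0)"

fun slips_take :: "nat \<Rightarrow> real \<Rightarrow> box list \<Rightarrow> nat" where
  "slips_take 0 c xs = 0"
| "slips_take (Suc n) c xs =
     (let t = nf_take c 0 xs in t + slips_take n c (drop t xs))"

(* segments produced by GNF on group G_i (i slips per segment, segment height c);
   each segment is represented by the list of items packed into it.
   (The "max 1" only matters for items taller than c, which cannot occur here.) *)
function gnf_segs :: "nat \<Rightarrow> real \<Rightarrow> box list \<Rightarrow> box list list" where
  "gnf_segs i c [] = []"
| "gnf_segs i c (x # xs) =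
     (let n = max 1 (slips_take i c (x # xs))
      in take n (x # xs) # gnf_segs i c (drop n (x # xs)))"
  by pat_completeness auto
termination
  by (relation "measure (\<lambda>(i, c, xs). length xs)") (auto simp: Let_def)

(* NFDH on the length-height face of width 1: total height used, for a list
   already sorted by non-increasing height; cur = used length of current level,
   lh = height of the current level *)
fun nfdh_h :: "real \<Rightarrow> real \<Rightarrow> box list \<Rightarrow> real" where
  "nfdh_h cur lh [] = lh"
| "nfdh_h cur lh (x # xs) =
     (if cur + len x \<le> 1 then nfdh_h (cur + len x) lh xs
      else lh + nfdh_h (len x) (hgt x) xs)"

definition nfdh_height :: "box list \<Rightarrow> real" where
  "nfdh_height xs =
     (case sort_key (\<lambda>b. - hgt b) xs of [] \<Rightarrow> 0 | y # ys \<Rightarrow> nfdh_h (len y) (hgt y) ys)"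

definition nfdh_fits :: "real \<Rightarrow> box list \<Rightarrow> bool" where
  "nfdh_fits c xs \<longleftrightarrow> nfdh_height xs \<le> c"

definition gnfdh_count :: "real \<Rightarrow> box list \<Rightarrow> nat" where
  "gnfdh_count c xs = (GREATEST j. j \<le> length xs \<and> nfdh_fits c (take j xs))"

function gnfdh_segs :: "real \<Rightarrow> box list \<Rightarrow> box list list" where
  "gnfdh_segs c [] = []"
| "gnfdh_segs c (x # xs) =
     (let n = max 1 (gnfdh_count c (x # xs))
      in take n (x # xs) # gnfdh_segs c (drop n (x # xs)))"
  by pat_completeness auto
termination
  by (relation "measure (\<lambda>(c, xs). length xs)") (auto simp: Let_def)

definition segs :: "nat \<Rightarrow> real \<Rightarrow> nat \<Rightarrow> box list \<Rightarrow> box list list" where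
  "segs k c q Sq = (if q < k then gnf_segs q c Sq else gnfdh_segs c Sq)"

definition seg_widths :: "nat \<Rightarrow> real \<Rightarrow> nat \<Rightarrow> box list \<Rightarrow> real list" where
  "seg_widths k c q Sq = map (\<lambda>s. wid (hd s)) (segs k c q Sq)"

definition I_list :: "nat \<Rightarrow> real \<Rightarrow> (nat \<Rightarrow> box list) \<Rightarrow> real list" where
  "I_list k c S = concat (map (\<lambda>q. seg_widths k c q (S q)) [1..<k+1])"

(* sizes: the set of distinct sizes; \<pi>d assigns a dual value to each size *)
definition dual_feasible :: "real set \<Rightarrow> (real \<Rightarrow> real) \<Rightarrow> bool" where
  "dual_feasible Sz \<pi>d \<longleftrightarrow>
     (\<forall>s\<in>Sz. 0 \<le> \<pi>d s) \<and>
     (\<forall>v :: real \<Rightarrow> nat. (\<Sum>s\<in>Sz. real (v s) * s) \<le> 1 \<longrightarrow> (\<Sum>s\<in>Sz. real (v s) * \<pi>d s) \<le> 1)"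

(* g(x) = pi_j for x in [s_j, s_{j-1}), i.e. \<pi>d of the largest size <= x,
   g(x) = 0 if no size is <= x (this covers g(0)=0 and [0,s_p)), g(1) = pi_1 *)
definition gfun :: "real set \<Rightarrow> (real \<Rightarrow> real) \<Rightarrow> real \<Rightarrow> real" where
  "gfun Sz \<pi>d x = (if \<exists>s\<in>Sz. s \<le> x then \<pi>d (Max {s\<in>Sz. s \<le> x}) else 0)"

definition f_k :: "nat \<Rightarrow> real \<Rightarrow> real" where
  "f_k k x =
     (if 0 < x \<and> x \<le> 1 / real k then real k * x / (real k - 1)
      else if \<exists>t::nat. 1 \<le> t \<and> t < k \<and> 1 / real (t + 1) < x \<and> x \<le> 1 / real t
      then 1 / real (THE t::nat. 1 \<le> t \<and> t < k \<and> 1 / real (t + 1) < x \<and> x \<le> 1 / real t)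
      else 0)"

definition W :: "nat \<Rightarrow> (real \<Rightarrow> real) \<Rightarrow> box list \<Rightarrow> real" where
  "W k g L = sum_list (map (\<lambda>R. f_k k (len R) * g (wid R) * hgt R) L)"

end

theory Submission
  imports Defs
begin

(* Every segment except the last one of its type is full. For a group G_q with q < k, each of
   its q slips was closed above height c - 1, and f_k = 1/q on G_q; for G_k, the NFDH packing of
   the segment together with the next item overflows height c, so the segment covers area at
   least (1 - 1/k)(c - 1) of the length-height face, and f_k(l) = k l/(k - 1) on G_k. Either way
   a full segment has f_k-weighted height at least c - 1. Widths are non-increasing and g is
   monotone, so every item of a full segment has g(w(R)) at least the g-value of the width of the
   next segment. Hence the items of type q contribute at least (c - 1)(G^q - g(w^q_1)) to W(L),
   and g <= 1 since a single item of size at most 1 is a feasible pattern. Summing over the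
   k types gives W(L) >= (c - 1) (G^1 + ... + G^k) - k (c - 1). *)

definition face_area :: "box list \<Rightarrow> real" where
  "face_area xs = sum_list (map (\<lambda>b. len b * hgt b) xs)"

lemma nfdh_h_eq_add: "nfdh_h cur lh ys = lh + nfdh_h cur 0 ys"
  by (induction ys arbitrary: cur) auto

(* Each NFDH level pays for the height h of the next one. If the items of the current level other
   than its first one have total length cur - e and area D, then D >= (cur - e) h because heights
   are non-increasing; the item opening the next level does not fit, so adding its area gives at
   least (1 - \<delta>) h. The first item of a level has thus already paid for the previous level. *)
lemma nfdh_h_shifted_bound:
  assumes "sorted_wrt (\<lambda>a b. hgt b \<le> hgt a) ys"
    and "\<forall>y\<in>set ys. 0 \<le> len y \<and> len y \<le> \<delta> \<and> 0 \<le> hgt y"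
    and "e \<le> \<delta>" "e \<le> cur" "0 \<le> D" "\<forall>y\<in>set ys. (cur - e) * hgt y \<le> D"
  shows "(1 - \<delta>) * nfdh_h cur 0 ys \<le> face_area ys + D"
  using assms
proof (induction ys arbitrary: cur e D)
  case Nil
  then show ?case by (simp add: face_area_def)
next
  case (Cons y ys)
  have y: "0 \<le> len y" "len y \<le> \<delta>" "0 \<le> hgt y" using Cons.prems(2) by auto
  have sorted: "sorted_wrt (\<lambda>a b. hgt b \<le> hgt a) ys" "\<forall>z\<in>set ys. hgt z \<le> hgt y"
    using Cons.prems(1) by auto
  have Dy: "(cur - e) * hgt y \<le> D" using Cons.prems(6) by auto
  show ?case
  proof (cases "cur + len y \<le> 1")
    case True
    have "\<forall>z\<in>set ys. (cur + len y - e) * hgt z \<le> D + len y * hgt y"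
    proof
      fix z assume z: "z \<in> set ys"
      have "(cur - e) * hgt z \<le> (cur - e) * hgt y"
        using sorted(2) z Cons.prems(4) by (intro mult_left_mono) auto
      moreover have "len y * hgt z \<le> len y * hgt y"
        using sorted(2) z y by (intro mult_left_mono) auto
      ultimately show "(cur + len y - e) * hgt z \<le> D + len y * hgt y"
        using Dy by (simp add: algebra_simps)
    qed
    then have "(1 - \<delta>) * nfdh_h (cur + len y) 0 ys \<le> face_area ys + (D + len y * hgt y)"
      using Cons.IH[OF sorted(1), where cur="cur + len y" and e=e and D="D + len y * hgt y"]
        Cons.prems y by auto
    then show ?thesis using True by (simp add: face_area_def algebra_simps)
  next
    case False
    have "(1 - \<delta>) * nfdh_h (len y) 0 ys \<le> face_area ys"
      using Cons.IH[OF sorted(1), where cur="len y" and e="len y" and D=0] Cons.prems y by auto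
    moreover have "(1 - \<delta>) * hgt y \<le> (cur - e + len y) * hgt y"
      using False Cons.prems(3) y by (intro mult_right_mono) auto
    ultimately show ?thesis
      using False Dy nfdh_h_eq_add[of "len y" "hgt y"] by (simp add: face_area_def algebra_simps)
  qed
qed

lemma nfdh_h_removal_head:
  assumes "sorted_wrt (\<lambda>a b. hgt b \<le> hgt a) (x # ys)"
    and "\<forall>y\<in>set (x # ys). 0 \<le> len y \<and> len y \<le> \<delta> \<and> 0 \<le> hgt y"
    and "0 \<le> cur" "0 \<le> D" "\<forall>y\<in>set (x # ys). cur * hgt y \<le> D"
  shows "(1 - \<delta>) * nfdh_h cur 0 (x # ys) \<le> face_area ys + D"
proof (cases "cur + len x \<le> 1")
  case True
  then show ?thesis
    using nfdh_h_shifted_bound[of ys \<delta> "len x" "cur + len x" D] assms by auto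
next
  case False
  have "(1 - \<delta>) * nfdh_h (len x) 0 ys \<le> face_area ys"
    using nfdh_h_shifted_bound[of ys \<delta> "len x" "len x" 0] assms by auto
  moreover have "(1 - \<delta>) * hgt x \<le> cur * hgt x"
    using False assms(2) by (intro mult_right_mono) auto
  ultimately show ?thesis
    using False assms(5) nfdh_h_eq_add[of "len x" "hgt x"] by (simp add: algebra_simps)
qed

(* Up to x every level pays with its full area, since its length already exceeds 1 - \<delta>; from the
   level of x on, x takes the place of the first item in nfdh_h_shifted_bound. *)
lemma nfdh_h_removal_bound:
  assumes "sorted_wrt (\<lambda>a b. hgt b \<le> hgt a) ys"
    and "\<forall>y\<in>set ys. 0 \<le> len y \<and> len y \<le> \<delta> \<and> 0 \<le> hgt y"
    and "x \<in> set ys" "0 \<le> cur" "0 \<le> D" "\<forall>y\<in>set ys. cur * hgt y \<le> D"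
  shows "(1 - \<delta>) * nfdh_h cur 0 ys \<le> face_area ys - len x * hgt x + D"
  using assms
proof (induction ys arbitrary: cur D)
  case Nil
  then show ?case by simp
next
  case (Cons y ys)
  show ?case
  proof (cases "y = x")
    case True
    then show ?thesis using nfdh_h_removal_head[of x ys \<delta> cur D] Cons.prems
      by (simp add: face_area_def)
  next
    case False
    then have x: "x \<in> set ys" using Cons.prems(3) by auto
    have y: "0 \<le> len y" "len y \<le> \<delta>" "0 \<le> hgt y" using Cons.prems(2) by auto
    have sorted: "sorted_wrt (\<lambda>a b. hgt b \<le> hgt a) ys"
      and credit: "\<forall>z\<in>set ys. len y * hgt z \<le> len y * hgt y"
      using Cons.prems(1) y by (auto intro: mult_left_mono)
    have Dy: "cur * hgt y \<le> D" and Dys: "\<forall>z\<in>set ys. cur * hgt z \<le> D"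
      using Cons.prems(6) by auto
    show ?thesis
    proof (cases "cur + len y \<le> 1")
      case True
      have "\<forall>z\<in>set ys. (cur + len y) * hgt z \<le> D + len y * hgt y"
        using Dys credit by (auto simp: distrib_right intro: add_mono)
      then have "(1 - \<delta>) * nfdh_h (cur + len y) 0 ys
                   \<le> face_area ys - len x * hgt x + (D + len y * hgt y)"
        using Cons.IH[OF sorted _ x, where cur="cur + len y" and D="D + len y * hgt y"]
          Cons.prems y by auto
      then show ?thesis using True by (simp add: face_area_def algebra_simps)
    next
      case False
      have "(1 - \<delta>) * nfdh_h (len y) 0 ys \<le> face_area ys - len x * hgt x + len y * hgt y"
        using Cons.IH[OF sorted _ x, where cur="len y" and D="len y * hgt y"]
          Cons.prems y credit by auto
      moreover have "(1 - \<delta>) * hgt y \<le> cur * hgt y"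
        using False y by (intro mult_right_mono) auto
      ultimately show ?thesis
        using False Dy nfdh_h_eq_add[of "len y" "hgt y"] by (simp add: face_area_def algebra_simps)
    qed
  qed
qed

lemma sum_list_map_mset_cong:
  fixes f :: "'a \<Rightarrow> 'b::comm_monoid_add"
  shows "mset xs = mset ys \<Longrightarrow> sum_list (map f xs) = sum_list (map f ys)"
  unfolding sum_mset_sum_list[symmetric] mset_map by simp

lemma nfdh_overflow_face_area:
  assumes "\<forall>y\<in>set T. 0 \<le> len y \<and> len y \<le> \<delta> \<and> 0 \<le> hgt y \<and> hgt y \<le> 1"
    and "x \<in> set T" "c < nfdh_height T" "\<delta> \<le> 1"
  shows "(1 - \<delta>) * (c - 1) \<le> face_area T - len x * hgt x"
proof -
  define ys where "ys = sort_key (\<lambda>b. - hgt b) T"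
  have mset_ys: "mset ys = mset T" by (simp add: ys_def)
  then have set_ys: "set ys = set T" by (metis set_mset_mset)
  have "sorted (map (\<lambda>b. - hgt b) ys)" by (simp add: ys_def)
  then have sorted: "sorted_wrt (\<lambda>a b. hgt b \<le> hgt a) ys" by (simp add: sorted_wrt_map)
  have "nfdh_height T \<le> 1 + nfdh_h 0 0 ys"
  proof (cases ys)
    case (Cons y ys')
    then have "y \<in> set T" using set_ys by auto
    then have "len y \<le> 1" "hgt y \<le> 1" using assms(1,4) by fastforce+
    then show ?thesis using Cons nfdh_h_eq_add[of "len y" "hgt y" ys']
      by (simp add: nfdh_height_def ys_def[symmetric])
  qed (simp add: nfdh_height_def ys_def[symmetric])
  then have "(1 - \<delta>) * (c - 1) \<le> (1 - \<delta>) * nfdh_h 0 0 ys"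
    using assms(3,4) by (intro mult_left_mono) auto
  also have "\<dots> \<le> face_area ys - len x * hgt x"
    using nfdh_h_removal_bound[OF sorted, of \<delta> x 0 0] assms(1,2) set_ys by simp
  also have "\<dots> = face_area T - len x * hgt x"
    using sum_list_map_mset_cong[OF mset_ys] by (simp add: face_area_def)
  finally show ?thesis .
qed

lemma nf_take_overflow:
  assumes "\<forall>y\<in>set xs. hgt y \<le> 1" "nf_take c acc xs < length xs"
  shows "c - 1 < acc + sum_list (map hgt (take (nf_take c acc xs) xs))"
  using assms
proof (induction xs arbitrary: acc)
  case Nil
  then show ?case by simp
next
  case (Cons y ys)
  show ?case
  proof (cases "acc + hgt y \<le> c")
    case True
    then show ?thesis using Cons.IH[of "acc + hgt y"] Cons.prems by (simp add: algebra_simps)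
  next
    case False
    then show ?thesis using Cons.prems by auto
  qed
qed

lemma slips_take_overflow:
  assumes "\<forall>y\<in>set xs. hgt y \<le> 1" "slips_take n c xs < length xs"
  shows "real n * (c - 1) \<le> sum_list (map hgt (take (slips_take n c xs) xs))"
  using assms
proof (induction n arbitrary: xs)
  case 0
  then show ?case by simp
next
  case (Suc n)
  define t where "t = nf_take c 0 xs"
  define s where "s = slips_take n c (drop t xs)"
  have split: "slips_take (Suc n) c xs = t + s" by (simp add: t_def s_def Let_def)
  have "t < length xs" "s < length (drop t xs)" using Suc.prems split by auto
  then have "c - 1 < sum_list (map hgt (take t xs))"
    and "real n * (c - 1) \<le> sum_list (map hgt (take s (drop t xs)))"
    using nf_take_overflow[of xs c 0] Suc.IH[of "drop t xs"] Suc.prems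
    by (auto simp: t_def s_def dest: in_set_dropD)
  moreover have "take (t + s) xs = take t xs @ take s (drop t xs)" by (simp add: take_add)
  ultimately show ?case using split by (simp add: algebra_simps)
qed

lemma slips_take_pos: "1 \<le> c \<Longrightarrow> hgt x \<le> 1 \<Longrightarrow> 0 < i \<Longrightarrow> 1 \<le> slips_take i c (x # xs)"
  by (cases i) (auto simp: Let_def)

lemma concat_gnf_segs: "concat (gnf_segs i c xs) = xs"
  by (induction i c xs rule: gnf_segs.induct) (simp_all add: Let_def)

lemma gnf_segs_nonempty: "s \<in> set (gnf_segs i c xs) \<Longrightarrow> s \<noteq> []"
  by (induction i c xs rule: gnf_segs.induct) (auto simp: Let_def)

lemma gnf_segs_eq_Nil_iff: "gnf_segs i c xs = [] \<longleftrightarrow> xs = []"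
  by (cases xs) (simp_all add: Let_def)

lemma gnf_segs_full:
  assumes "\<forall>y\<in>set xs. hgt y \<le> 1" "1 \<le> c" "0 < i"
  shows "\<forall>s\<in>set (butlast (gnf_segs i c xs)). real i * (c - 1) \<le> sum_list (map hgt s)"
  using assms
proof (induction i c xs rule: gnf_segs.induct)
  case (1 i c)
  then show ?case by simp
next
  case (2 i c x xs)
  define n where "n = max 1 (slips_take i c (x # xs))"
  have n: "n = slips_take i c (x # xs)" using slips_take_pos[of c x i xs] 2 by (simp add: n_def)
  have segs: "gnf_segs i c (x # xs) = take n (x # xs) # gnf_segs i c (drop n (x # xs))"
    by (simp add: Let_def n_def)
  have IH: "\<forall>s\<in>set (butlast (gnf_segs i c (drop n (x # xs)))). real i * (c - 1) \<le> sum_list (map hgt s)"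
    using "2.IH"[OF n_def _ "2.prems"(2,3)] "2.prems"(1) by (meson in_set_dropD)
  have "real i * (c - 1) \<le> sum_list (map hgt (take n (x # xs)))"
    if "gnf_segs i c (drop n (x # xs)) \<noteq> []"
  proof -
    have "n < length (x # xs)" using that by (auto simp: gnf_segs_eq_Nil_iff)
    then show ?thesis using slips_take_overflow[of "x # xs" i c] "2.prems" n by auto
  qed
  then show ?case unfolding segs using IH by simp
qed

lemma concat_gnfdh_segs: "concat (gnfdh_segs c xs) = xs"
  by (induction c xs rule: gnfdh_segs.induct) (simp_all add: Let_def)

lemma gnfdh_segs_nonempty: "s \<in> set (gnfdh_segs c xs) \<Longrightarrow> s \<noteq> []"
  by (induction c xs rule: gnfdh_segs.induct) (auto simp: Let_def)

lemma gnfdh_segs_eq_Nil_iff: "gnfdh_segs c xs = [] \<longleftrightarrow> xs = []"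
  by (cases xs) (simp_all add: Let_def)

lemma
  assumes "xs \<noteq> []" "\<forall>y\<in>set xs. hgt y \<le> 1" "1 \<le> c"
  shows gnfdh_count_pos: "1 \<le> gnfdh_count c xs"
    and gnfdh_count_overflow: "gnfdh_count c xs < length xs \<Longrightarrow>
           c < nfdh_height (take (Suc (gnfdh_count c xs)) xs)"
proof -
  define P where "P = (\<lambda>j. j \<le> length xs \<and> nfdh_fits c (take j xs))"
  have P1: "P 1" using assms by (cases xs) (simp_all add: P_def nfdh_fits_def nfdh_height_def)
  have bound: "\<And>j. P j \<Longrightarrow> j \<le> length xs" by (simp add: P_def)
  have count: "gnfdh_count c xs = Greatest P" by (simp add: gnfdh_count_def P_def)
  show "1 \<le> gnfdh_count c xs" using Greatest_le_nat[of P 1, OF P1 bound] count by simp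
  assume "gnfdh_count c xs < length xs"
  then have "\<not> P (Suc (Greatest P))"
    using Greatest_le_nat[of P "Suc (Greatest P)", OF _ bound] count by fastforce
  then show "c < nfdh_height (take (Suc (gnfdh_count c xs)) xs)"
    using \<open>gnfdh_count c xs < length xs\<close> count by (auto simp: P_def nfdh_fits_def)
qed

lemma gnfdh_segs_full:
  assumes "\<forall>y\<in>set xs. 0 \<le> len y \<and> len y \<le> \<delta> \<and> 0 \<le> hgt y \<and> hgt y \<le> 1" "1 \<le> c" "\<delta> \<le> 1"
  shows "\<forall>s\<in>set (butlast (gnfdh_segs c xs)). (1 - \<delta>) * (c - 1) \<le> face_area s"
  using assms
proof (induction c xs rule: gnfdh_segs.induct)
  case (1 c)
  then show ?case by simp
next
  case (2 c x xs)
  define n where "n = max 1 (gnfdh_count c (x # xs))"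
  have n: "n = gnfdh_count c (x # xs)" using gnfdh_count_pos[of "x # xs" c] 2 by (simp add: n_def)
  have segs: "gnfdh_segs c (x # xs) = take n (x # xs) # gnfdh_segs c (drop n (x # xs))"
    by (simp add: Let_def n_def)
  have IH: "\<forall>s\<in>set (butlast (gnfdh_segs c (drop n (x # xs)))). (1 - \<delta>) * (c - 1) \<le> face_area s"
    using "2.IH"[OF n_def _ "2.prems"(2,3)] "2.prems"(1) by (meson in_set_dropD)
  have "(1 - \<delta>) * (c - 1) \<le> face_area (take n (x # xs))"
    if "gnfdh_segs c (drop n (x # xs)) \<noteq> []"
  proof -
    let ?T = "take (Suc n) (x # xs)" and ?y = "(x # xs) ! n"
    have "n < length (x # xs)" using that by (auto simp: gnfdh_segs_eq_Nil_iff)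
    then have T: "?T = take n (x # xs) @ [?y]" and "c < nfdh_height ?T"
      using gnfdh_count_overflow[of "x # xs" c] "2.prems" n
      by (auto simp del: take_Suc_Cons intro: take_Suc_conv_app_nth)
    moreover have "\<forall>y\<in>set ?T. 0 \<le> len y \<and> len y \<le> \<delta> \<and> 0 \<le> hgt y \<and> hgt y \<le> 1"
      using "2.prems"(1) by (auto dest: in_set_takeD)
    ultimately have "(1 - \<delta>) * (c - 1) \<le> face_area ?T - len ?y * hgt ?y"
      using nfdh_overflow_face_area[of ?T \<delta> ?y c] "2.prems" by simp
    then show ?thesis unfolding T by (simp add: face_area_def)
  qed
  then show ?case unfolding segs using IH by simp
qed

lemma full_segments_weight:
  fixes \<phi> :: "box \<Rightarrow> real" and g :: "real \<Rightarrow> real"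
  assumes "\<forall>s\<in>set (butlast ss). a \<le> sum_list (map \<phi> s)"
    and "\<forall>s\<in>set ss. s \<noteq> []" and "sorted_wrt (\<lambda>a b. wid b \<le> wid a) (concat ss)"
    and "\<forall>R\<in>set (concat ss). 0 \<le> \<phi> R" and "mono g" and "\<And>x. 0 \<le> g x"
  shows "a * sum_list (map (\<lambda>s. g (wid (hd s))) (tl ss))
           \<le> sum_list (map (\<lambda>R. \<phi> R * g (wid R)) (concat ss))"
  using assms(1-4)
proof (induction ss rule: induct_list012)
  case 1
  then show ?case by simp
next
  case (2 s)
  then show ?case by (auto intro!: sum_list_nonneg mult_nonneg_nonneg assms(6))
next
  case (3 s s' r)
  have IH: "a * sum_list (map (\<lambda>s. g (wid (hd s))) r)
              \<le> sum_list (map (\<lambda>R. \<phi> R * g (wid R)) (concat (s' # r)))"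
    using "3.IH"(2) "3.prems" by (simp add: sorted_wrt_append)
  have "hd s' \<in> set (concat (s' # r))" using "3.prems"(2) by simp
  then have wider: "\<forall>R\<in>set s. wid (hd s') \<le> wid R"
    using "3.prems"(3) by (simp add: sorted_wrt_append)
  have "a * g (wid (hd s')) \<le> sum_list (map \<phi> s) * g (wid (hd s'))"
    using "3.prems"(1) assms(6) by (intro mult_right_mono) auto
  also have "\<dots> = sum_list (map (\<lambda>R. \<phi> R * g (wid (hd s'))) s)"
    by (simp add: sum_list_mult_const)
  also have "\<dots> \<le> sum_list (map (\<lambda>R. \<phi> R * g (wid R)) s)"
    using wider "3.prems"(4) assms(5) by (intro sum_list_mono mult_left_mono) (auto dest: monoD)
  finally show ?case using IH by (simp add: algebra_simps)
qed

lemma dual_feasible_le_1: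
  assumes "dual_feasible Sz \<pi>d" "finite Sz" "s \<in> Sz" "s \<le> 1"
  shows "\<pi>d s \<le> 1"
proof -
  define v :: "real \<Rightarrow> nat" where "v t = (if t = s then 1 else 0)" for t
  have "real (v t) * a = (if t = s then a else 0)" for t a by (simp add: v_def)
  then have "(\<Sum>t\<in>Sz. real (v t) * t) = s" "(\<Sum>t\<in>Sz. real (v t) * \<pi>d t) = \<pi>d s"
    using assms(2,3) by simp_all
  then show ?thesis using assms(1,4) unfolding dual_feasible_def by metis
qed

lemma gfun_cases:
  assumes "finite Sz"
  shows "gfun Sz \<pi>d x = 0 \<or> (\<exists>s\<in>Sz. s \<le> x \<and> gfun Sz \<pi>d x = \<pi>d s)"
proof (cases "\<exists>s\<in>Sz. s \<le> x")
  case True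
  then have "Max {s\<in>Sz. s \<le> x} \<in> {s\<in>Sz. s \<le> x}" using assms by (intro Max_in) auto
  then show ?thesis using True by (auto simp: gfun_def)
qed (simp add: gfun_def)

lemma gfun_nonneg: "finite Sz \<Longrightarrow> \<forall>s\<in>Sz. 0 \<le> \<pi>d s \<Longrightarrow> 0 \<le> gfun Sz \<pi>d x"
  using gfun_cases[of Sz \<pi>d x] by auto

lemma gfun_le_1: "finite Sz \<Longrightarrow> dual_feasible Sz \<pi>d \<Longrightarrow> x \<le> 1 \<Longrightarrow> gfun Sz \<pi>d x \<le> 1"
  using gfun_cases[of Sz \<pi>d x] dual_feasible_le_1[of Sz \<pi>d] by fastforce

lemma gfun_mono:
  assumes "finite Sz" "\<forall>s\<in>Sz. 0 \<le> \<pi>d s" "\<forall>s\<in>Sz. \<forall>t\<in>Sz. t \<le> s \<longrightarrow> \<pi>d t \<le> \<pi>d s"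
  shows "mono (gfun Sz \<pi>d)"
proof
  fix x y :: real assume "x \<le> y"
  show "gfun Sz \<pi>d x \<le> gfun Sz \<pi>d y"
  proof (cases "\<exists>s\<in>Sz. s \<le> x")
    case True
    then have y: "\<exists>s\<in>Sz. s \<le> y" using \<open>x \<le> y\<close> by (auto intro: order_trans)
    have "Max {s\<in>Sz. s \<le> x} \<in> Sz" "Max {s\<in>Sz. s \<le> y} \<in> Sz"
      using True y assms(1) Max_in[of "{s\<in>Sz. s \<le> x}"] Max_in[of "{s\<in>Sz. s \<le> y}"] by auto
    moreover have "Max {s\<in>Sz. s \<le> x} \<le> Max {s\<in>Sz. s \<le> y}"
      using True assms(1) \<open>x \<le> y\<close> by (intro Max_mono) auto
    ultimately show ?thesis using True y assms(3) by (simp add: gfun_def)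
  next
    case False
    then show ?thesis using gfun_nonneg[OF assms(1,2)] by (simp add: gfun_def)
  qed
qed

lemma f_k_small: "0 < x \<Longrightarrow> x \<le> 1 / real k \<Longrightarrow> f_k k x = real k * x / (real k - 1)"
  by (simp add: f_k_def)

lemma f_k_nonneg: "0 < x \<Longrightarrow> 2 \<le> k \<Longrightarrow> 0 \<le> f_k k x"
  unfolding f_k_def by auto

lemma f_k_eq_inverse:
  assumes "1 \<le> q" "q < k" "1 / real (q + 1) < x" "x \<le> 1 / real q"
  shows "f_k k x = 1 / real q"
proof -
  have "1 / real k \<le> 1 / real (q + 1)" using assms(1,2) by (intro divide_left_mono) auto
  then have not_small: "\<not> (0 < x \<and> x \<le> 1 / real k)" using assms(3) by auto
  have unique: "t = q" if "1 \<le> t" "1 / real (t + 1) < x" "x \<le> 1 / real t" for t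
  proof -
    have "1 / real (t + 1) < 1 / real q" using that assms by linarith
    then have "real q < real (t + 1)" using assms(1) by (simp add: divide_less_cancel field_simps)
    moreover have "1 / real (q + 1) < 1 / real t" using that assms by linarith
    then have "real t < real (q + 1)" using that(1) by (simp add: divide_less_cancel field_simps)
    ultimately show ?thesis by linarith
  qed
  have "\<exists>t. 1 \<le> t \<and> t < k \<and> 1 / real (t + 1) < x \<and> x \<le> 1 / real t"
    using assms by blast
  moreover have "(THE t. 1 \<le> t \<and> t < k \<and> 1 / real (t + 1) < x \<and> x \<le> 1 / real t) = q"
    using assms unique by (intro the_equality) blast+
  ultimately show ?thesis unfolding f_k_def by (simp only: not_small if_False if_True)
qed

lemma in_group_unique:
  assumes "1 \<le> q" "q \<le> k" "1 \<le> q'" "q' \<le> k" "in_group k q R" "in_group k q' R"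
  shows "q = q'"
proof -
  have False if "1 \<le> a" "a < b" "b \<le> k" "in_group k a R" "in_group k b R" for a b
  proof -
    have "1 / real (a + 1) < len R" "len R \<le> 1 / real b"
      using that by (auto simp: in_group_def split: if_splits)
    moreover have "1 / real b \<le> 1 / real (a + 1)" using that by (intro divide_left_mono) auto
    ultimately show False by linarith
  qed
  then show ?thesis using assms by (cases q q' rule: linorder_cases) blast+
qed

lemma sum_filter_disjoint_le:
  fixes w :: "'a \<Rightarrow> real"
  assumes "finite A" "\<forall>x\<in>set xs. 0 \<le> w x"
    and "\<forall>x\<in>set xs. \<forall>i\<in>A. \<forall>j\<in>A. P i x \<longrightarrow> P j x \<longrightarrow> i = j"
  shows "(\<Sum>i\<in>A. sum_list (map w (filter (P i) xs))) \<le> sum_list (map w xs)"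
  using assms(2,3)
proof (induction xs)
  case Nil
  then show ?case by simp
next
  case (Cons x xs)
  have "(\<Sum>i\<in>A. if P i x then w x else 0) = real (card {i\<in>A. P i x}) * w x"
    using sum.inter_filter[OF assms(1), of "\<lambda>_. w x" "\<lambda>i. P i x"] by simp
  also have "\<dots> \<le> w x"
    using Cons.prems by (intro mult_left_le_one_le) (auto simp: card_le_Suc0_iff_eq assms(1))
  finally have "(\<Sum>i\<in>A. if P i x then w x else 0) \<le> w x" .
  moreover have "(\<Sum>i\<in>A. sum_list (map w (filter (P i) xs))) \<le> sum_list (map w xs)"
    using Cons by simp
  moreover have "(\<Sum>i\<in>A. sum_list (map w (filter (P i) (x # xs))))
      = (\<Sum>i\<in>A. if P i x then w x else 0) + (\<Sum>i\<in>A. sum_list (map w (filter (P i) xs)))"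
    by (subst sum.distrib[symmetric]) (rule sum.cong, auto)
  ultimately show ?case by simp
qed

lemma concat_segs: "concat (segs k c q xs) = xs"
  by (simp add: segs_def concat_gnf_segs concat_gnfdh_segs)

lemma segs_nonempty: "s \<in> set (segs k c q xs) \<Longrightarrow> s \<noteq> []"
  by (auto simp: segs_def dest: gnf_segs_nonempty gnfdh_segs_nonempty split: if_splits)

lemma set_segs_subset:
  assumes "s \<in> set (segs k c q xs)"
  shows "set s \<subseteq> set xs"
proof -
  have "set s \<subseteq> set (concat (segs k c q xs))" using assms by auto
  then show ?thesis by (simp only: concat_segs)
qed

lemma segs_full_weight:
  assumes q: "1 \<le> q" "q \<le> k" and k: "2 \<le> k" and c: "2 \<le> c"
    and boxes: "\<forall>R\<in>set xs. unit_box R \<and> in_group k q R"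
  shows "\<forall>s\<in>set (butlast (segs k (real c) q xs)).
           real c - 1 \<le> sum_list (map (\<lambda>R. f_k k (len R) * hgt R) s)"
proof
  fix s assume s: "s \<in> set (butlast (segs k (real c) q xs))"
  then have s_boxes: "\<forall>R\<in>set s. unit_box R \<and> in_group k q R"
    using boxes set_segs_subset by (blast dest: in_set_butlastD)
  show "real c - 1 \<le> sum_list (map (\<lambda>R. f_k k (len R) * hgt R) s)"
  proof (cases "q < k")
    case True
    have "real q * (real c - 1) \<le> sum_list (map hgt s)"
      using gnf_segs_full[of xs "real c" q] s boxes True q c by (auto simp: segs_def unit_box_def)
    then have "real c - 1 \<le> 1 / real q * sum_list (map hgt s)"
      using q by (simp add: field_simps)
    also have "\<dots> = sum_list (map (\<lambda>R. 1 / real q * hgt R) s)"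
      by (rule sum_list_const_mult[symmetric])
    also have "\<dots> = sum_list (map (\<lambda>R. f_k k (len R) * hgt R) s)"
      using s_boxes True q by (intro arg_cong[where f=sum_list] map_cong)
        (auto simp: f_k_eq_inverse in_group_def)
    finally show ?thesis .
  next
    case False
    have "\<forall>y\<in>set xs. 0 \<le> len y \<and> len y \<le> 1 / real k \<and> 0 \<le> hgt y \<and> hgt y \<le> 1"
      using boxes False q by (fastforce simp: unit_box_def in_group_def)
    then have "(1 - 1 / real k) * (real c - 1) \<le> face_area s"
      using gnfdh_segs_full[of xs "1 / real k" "real c"] s False q k c by (auto simp: segs_def)
    then have "real c - 1 \<le> real k / (real k - 1) * face_area s"
      using k by (simp add: field_simps)
    also have "\<dots> = sum_list (map (\<lambda>R. real k / (real k - 1) * (len R * hgt R)) s)"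
      unfolding face_area_def by (rule sum_list_const_mult[symmetric])
    also have "\<dots> = sum_list (map (\<lambda>R. f_k k (len R) * hgt R) s)"
      using s_boxes False q by (intro arg_cong[where f=sum_list] map_cong)
        (auto simp: f_k_small in_group_def unit_box_def)
    finally show ?thesis .
  qed
qed

lemma group_weight_bound:
  fixes g :: "real \<Rightarrow> real"
  assumes "1 \<le> q" "q \<le> k" "2 \<le> k" "2 \<le> c"
    and boxes: "\<forall>R\<in>set xs. unit_box R \<and> in_group k q R"
    and sorted: "sorted_wrt (\<lambda>a b. wid b \<le> wid a) xs"
    and g: "mono g" "\<And>x. 0 \<le> g x" "\<And>x. x \<le> 1 \<Longrightarrow> g x \<le> 1"
  shows "(real c - 1) * sum_list (map g (seg_widths k (real c) q xs)) - (real c - 1)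
           \<le> sum_list (map (\<lambda>R. f_k k (len R) * g (wid R) * hgt R) xs)"
proof (cases "segs k (real c) q xs")
  case Nil
  then show ?thesis using concat_segs[of k "real c" q xs] \<open>2 \<le> c\<close> by (simp add: seg_widths_def)
next
  case (Cons s ss)
  let ?G = "sum_list (map (\<lambda>s. g (wid (hd s))) ss)"
  have "s \<in> set (segs k (real c) q xs)" using Cons by simp
  then have "hd s \<in> set xs" using segs_nonempty set_segs_subset hd_in_set by blast
  then have "(real c - 1) * g (wid (hd s)) \<le> real c - 1"
    using boxes g(3) \<open>2 \<le> c\<close> by (auto simp: unit_box_def intro: mult_left_le)
  moreover have "(real c - 1) * ?G \<le> sum_list (map (\<lambda>R. f_k k (len R) * g (wid R) * hgt R) xs)"
  proof -
    let ?ss = "segs k (real c) q xs"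
    have "\<forall>s\<in>set ?ss. s \<noteq> []" using segs_nonempty by blast
    moreover have "sorted_wrt (\<lambda>a b. wid b \<le> wid a) (concat ?ss)"
      using sorted by (simp only: concat_segs)
    moreover have "\<forall>R\<in>set (concat ?ss). 0 \<le> f_k k (len R) * hgt R"
      using boxes f_k_nonneg \<open>2 \<le> k\<close>
      by (auto simp: concat_segs unit_box_def intro!: mult_nonneg_nonneg)
    ultimately have "(real c - 1) * sum_list (map (\<lambda>s. g (wid (hd s))) (tl ?ss))
        \<le> sum_list (map (\<lambda>R. f_k k (len R) * hgt R * g (wid R)) (concat ?ss))"
      by (rule full_segments_weight[OF segs_full_weight[OF assms(1-5)] _ _ _ g(1,2)])
    then show ?thesis unfolding concat_segs using Cons by (simp add: mult_ac)
  qed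
  moreover have "sum_list (map g (seg_widths k (real c) q xs)) = g (wid (hd s)) + ?G"
    using Cons by (simp add: seg_widths_def comp_def)
  ultimately show ?thesis by (simp add: distrib_left)
qed

lemma sum_groups_le:
  fixes w :: "box \<Rightarrow> real"
  assumes "\<forall>R\<in>set L. 0 \<le> w R"
    and "\<forall>q\<in>{1..k}. mset (S q) = mset (filter (in_group k q) L)"
  shows "(\<Sum>q=1..k. sum_list (map w (S q))) \<le> sum_list (map w L)"
proof -
  have "(\<Sum>q=1..k. sum_list (map w (S q))) = (\<Sum>q=1..k. sum_list (map w (filter (in_group k q) L)))"
    using assms(2) by (intro sum.cong refl sum_list_map_mset_cong) auto
  also have "\<dots> \<le> sum_list (map w L)"
    using assms(1) in_group_unique by (intro sum_filter_disjoint_le) auto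
  finally show ?thesis .
qed

theorem lemma6:
  fixes L :: "box list" and k c :: nat
    and S :: "nat \<Rightarrow> box list" and \<pi>d :: "real \<Rightarrow> real"
  assumes boxes: "\<forall>R\<in>set L. unit_box R"
    and k2: "k \<ge> 2" and c2: "c \<ge> 2"
    and sorted_groups: "\<forall>q\<in>{1..k}. mset (S q) = mset (filter (in_group k q) L)
                          \<and> sorted_wrt (\<lambda>a b. wid b \<le> wid a) (S q)"
    and feas: "dual_feasible (set (I_list k (real c) S)) \<pi>d"
    and mono: "\<forall>s\<in>set (I_list k (real c) S). \<forall>t\<in>set (I_list k (real c) S).
                 t \<le> s \<longrightarrow> \<pi>d t \<le> \<pi>d s"
  shows "W k (gfun (set (I_list k (real c) S)) \<pi>d) L >
         (real c - 1) * (\<Sum>q=1..k. sum_list (map (gfun (set (I_list k (real c) S)) \<pi>d)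
                                                 (seg_widths k (real c) q (S q))))
         - real c * real k"
proof -
  define g where "g = gfun (set (I_list k (real c) S)) \<pi>d"
  define w where "w = (\<lambda>R. f_k k (len R) * g (wid R) * hgt R)"
  have nonneg: "\<forall>s\<in>set (I_list k (real c) S). 0 \<le> \<pi>d s"
    using feas by (simp add: dual_feasible_def)
  have g: "mono g" "\<And>x. 0 \<le> g x" "\<And>x. x \<le> 1 \<Longrightarrow> g x \<le> 1"
    unfolding g_def using gfun_mono[OF _ nonneg mono] gfun_nonneg[OF _ nonneg] gfun_le_1[OF _ feas]
    by simp_all
  have "(\<Sum>q=1..k. (real c - 1) * sum_list (map g (seg_widths k (real c) q (S q))) - (real c - 1))
        \<le> (\<Sum>q=1..k. sum_list (map w (S q)))"
  proof (rule sum_mono)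
    fix q assume q: "q \<in> {1..k}"
    then have "set (S q) = {R \<in> set L. in_group k q R}"
      using sorted_groups by (metis mset_eq_setD set_filter)
    then show "(real c - 1) * sum_list (map g (seg_widths k (real c) q (S q))) - (real c - 1)
               \<le> sum_list (map w (S q))"
      unfolding w_def using group_weight_bound[of q k c] q k2 c2 sorted_groups boxes g by auto
  qed
  also have "\<dots> \<le> sum_list (map w L)"
    using boxes k2 g(2) f_k_nonneg sorted_groups by (intro sum_groups_le) (auto simp: w_def unit_box_def)
  also have "\<dots> = W k g L" by (simp add: W_def w_def)
  finally have "(real c - 1) * (\<Sum>q=1..k. sum_list (map g (seg_widths k (real c) q (S q))))
                  - real k * (real c - 1) \<le> W k g L"
    by (simp add: sum_subtractf sum_distrib_left)
  moreover have "real k * (real c - 1) < real c * real k" using k2 by (simp add: algebra_simps)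
  ultimately show ?thesis unfolding g_def by linarith
qed

end
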